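(* Let $v,w$ be positive integers, $\theta\in[0,1]$, and let $K_{v,w}$ be the complete bipartite graph with parts $V$, $W$, $|V|=v$, $|W|=w$. Let $X$ be the capture time (the number of the move at which capture occurs) in the tipsy cop and drunken robber game on $K_{v,w}$, and let $\mathbb{E}^i[X]$ be its expectation when the game starts in Position $i$ (whenever that position exists). Then \begin{align*} \mathbb{E}^1[X]&=\frac{4vw-3w-v+1}{v+w-1}, & \mathbb{E}^2[X]&=\frac{2\,(vw+\theta v(w-1))}{vw-\theta^2(v-1)(w-1)},\\ \mathbb{E}^3[X]&=\frac{4vw-3v-w+1}{v+w-1}, & \mathbb{E}^4[X]&=\frac{2\,(vw+\theta w(v-1))}{vw-\theta^2(v-1)(w-1)}. \end{align*}
   Context: Tipsy cop and drunken robber game on a finite connected graph $G$: a cop and a robber are placed at distinct vertices. Moves are numbered $1,2,3,\dots$; the robber makes the odd-numbered moves and the cop the even-numbered moves, and on each move the mover must move to a vertex adjacent to its current vertex (staying put is not allowed). The robber always moves to a neighbor chosen uniformly at random. The cop, independently at each of her moves, with probability $\theta$ moves to a neighbor chosen uniformly at random, and with probability $1-\theta$ makes a directed move to a neighbor lying on a shortest path to the robber's current vertex (in particular onto the robber's vertex if it is adjacent). All random choices are independent. The robber is captured (and the game ends) as soon as both occupy the same vertex. Starting positions on $K_{v,w}$: Position 1: the cop is at a vertex of $V$ and the robber at a vertex of $W$; Position 2: cop and robber are at two distinct vertices of $V$; Position 3: the robber is at a vertex of $V$ and the cop at a vertex of $W$; Position 4: cop and robber are at two distinct vertices of $W$.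 *)

theory Defs
  imports "HOL-Probability.Probability"
begin

inductive walk :: "('a \<Rightarrow> 'a \<Rightarrow> bool) \<Rightarrow> nat \<Rightarrow> 'a \<Rightarrow> 'a \<Rightarrow> bool" for E where
  walk_nil: "walk E 0 x x"
| walk_cons: "E x y \<Longrightarrow> walk E n y z \<Longrightarrow> walk E (Suc n) x z"

definition gdist :: "('a \<Rightarrow> 'a \<Rightarrow> bool) \<Rightarrow> 'a \<Rightarrow> 'a \<Rightarrow> nat" where
  "gdist E x y = (LEAST n. walk E n x y)"

definition nbrs :: "'a set \<Rightarrow> ('a \<Rightarrow> 'a \<Rightarrow> bool) \<Rightarrow> 'a \<Rightarrow> 'a set" where
  "nbrs S E x = {y \<in> S. E x y}"

definition directed_moves :: "'a set \<Rightarrow> ('a \<Rightarrow> 'a \<Rightarrow> bool) \<Rightarrow> 'a \<Rightarrow> 'a \<Rightarrow> 'a set" where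
  "directed_moves S E c r = {z \<in> nbrs S E c. Suc (gdist E z r) = gdist E c r}"

(* Play c r b : cop at c, robber at r, b = True iff the robber makes the next move *)
datatype 'a gstate = Play 'a 'a bool | Caught

definition game_step :: "real \<Rightarrow> 'a set \<Rightarrow> ('a \<Rightarrow> 'a \<Rightarrow> bool) \<Rightarrow> 'a gstate \<Rightarrow> 'a gstate pmf" where
  "game_step \<theta> S E s = (case s of
      Caught \<Rightarrow> return_pmf Caught
    | Play c r robber_turn \<Rightarrow>
        (if robber_turn then
           map_pmf (\<lambda>r'. if r' = c then Caught else Play c r' False) (pmf_of_set (nbrs S E r))
         else
           map_pmf (\<lambda>c'. if c' = r then Caught else Play c' r True)
             (bernoulli_pmf \<theta> \<bind> (\<lambda>b. if b then pmf_of_set (nbrs S E c)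
                                           else pmf_of_set (directed_moves S E c r)))))"

definition game_dist :: "real \<Rightarrow> 'a set \<Rightarrow> ('a \<Rightarrow> 'a \<Rightarrow> bool) \<Rightarrow> 'a gstate \<Rightarrow> nat \<Rightarrow> 'a gstate pmf" where
  "game_dist \<theta> S E s0 n = ((\<lambda>p. p \<bind> game_step \<theta> S E) ^^ n) (return_pmf s0)"

definition caught_by :: "real \<Rightarrow> 'a set \<Rightarrow> ('a \<Rightarrow> 'a \<Rightarrow> bool) \<Rightarrow> 'a gstate \<Rightarrow> nat \<Rightarrow> real" where
  "caught_by \<theta> S E s0 n = pmf (game_dist \<theta> S E s0 n) Caught"

definition capture_at :: "real \<Rightarrow> 'a set \<Rightarrow> ('a \<Rightarrow> 'a \<Rightarrow> bool) \<Rightarrow> 'a gstate \<Rightarrow> nat \<Rightarrow> real" where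
  "capture_at \<theta> S E s0 n =
     (if n = 0 then caught_by \<theta> S E s0 0 else caught_by \<theta> S E s0 n - caught_by \<theta> S E s0 (n - 1))"

(* E[X] for X with values in nat \<union> {\<infinity>}: sum of n P(X=n) plus \<infinity> \<cdot> P(X=\<infinity>) *)
definition expected_capture_time :: "real \<Rightarrow> 'a set \<Rightarrow> ('a \<Rightarrow> 'a \<Rightarrow> bool) \<Rightarrow> 'a gstate \<Rightarrow> ennreal" where
  "expected_capture_time \<theta> S E s0 =
     (\<Sum>n. ennreal (real n * capture_at \<theta> S E s0 n))
     + (if (SUP n. ennreal (caught_by \<theta> S E s0 n)) < 1 then \<top> else 0)"

definition Kpart_V :: "nat \<Rightarrow> (nat + nat) set" where "Kpart_V v = Inl ` {..<v}"
definition Kpart_W :: "nat \<Rightarrow> (nat + nat) set" where "Kpart_W w = Inr ` {..<w}"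
definition Kverts :: "nat \<Rightarrow> nat \<Rightarrow> (nat + nat) set" where "Kverts v w = Kpart_V v \<union> Kpart_W w"
definition Kadj :: "nat \<Rightarrow> nat \<Rightarrow> (nat + nat) \<Rightarrow> (nat + nat) \<Rightarrow> bool" where
  "Kadj v w x y = ((x \<in> Kpart_V v \<and> y \<in> Kpart_W w) \<or> (x \<in> Kpart_W w \<and> y \<in> Kpart_V v))"

end

theory Submission
  imports Defs
begin

text \<open>On \<open>K\<^sub>v\<^sub>,\<^sub>w\<close> the states of the game run through two cycles of four classes,
determined by the sides of cop and robber and by who moves next. By first-step analysis, the
probability of surviving \<open>n\<close> more moves depends only on the class and is the product of the
first \<open>n\<close> terms of a periodic sequence of one-move survival probabilities: \<open>1 - 1/|P|\<close> when
the robber steps into the cop's part \<open>P\<close>, \<open>\<theta>(1 - 1/|P|)\<close> when the cop moves from a vertex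
adjacent to the robber into the robber's part \<open>P\<close>, and \<open>1\<close> otherwise. The expected capture time is the
sum of these tail probabilities, a geometric series with ratio the product over one period.\<close>

lemma game_dist_Suc:
  "game_dist \<theta> S E s (Suc n) = game_step \<theta> S E s \<bind> (\<lambda>s'. game_dist \<theta> S E s' n)"
proof (induction n arbitrary: s)
  case 0
  show ?case by (simp add: game_dist_def bind_return_pmf bind_return_pmf')
next
  case (Suc n)
  have "game_dist \<theta> S E s (Suc (Suc n)) = game_dist \<theta> S E s (Suc n) \<bind> game_step \<theta> S E"
    by (simp add: game_dist_def)
  also have "\<dots> = game_step \<theta> S E s \<bind> (\<lambda>s'. game_dist \<theta> S E s' n \<bind> game_step \<theta> S E)"
    by (simp add: Suc.IH bind_assoc_pmf)
  also have "\<dots> = game_step \<theta> S E s \<bind> (\<lambda>s'. game_dist \<theta> S E s' (Suc n))"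
    by (simp add: game_dist_def)
  finally show ?case .
qed

lemma caught_by_Suc:
  "caught_by \<theta> S E s (Suc n) =
     measure_pmf.expectation (game_step \<theta> S E s) (\<lambda>s'. caught_by \<theta> S E s' n)"
  unfolding caught_by_def game_dist_Suc pmf_bind ..

lemma caught_by_Caught [simp]: "caught_by \<theta> S E Caught n = 1"
proof -
  have "game_dist \<theta> S E Caught n = return_pmf Caught"
    by (induction n) (simp_all add: game_dist_def game_step_def bind_return_pmf)
  then show ?thesis by (simp add: caught_by_def)
qed

lemma caught_by_Play_0 [simp]: "caught_by \<theta> S E (Play c r b) 0 = 0"
  by (simp add: caught_by_def game_dist_def)

lemma integrable_caught_by: "integrable (measure_pmf p) (\<lambda>s. caught_by \<theta> S E s n)"
  by (rule measure_pmf.integrable_const_bound[where B = 1]) (simp_all add: caught_by_def pmf_le_1)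

text \<open>Capture is absorbing.\<close>

lemma caught_by_le_Suc: "caught_by \<theta> S E s n \<le> caught_by \<theta> S E s (Suc n)"
proof (induction n arbitrary: s)
  case 0
  show ?case
  proof (cases s)
    case (Play c r b)
    then show ?thesis by (simp add: caught_by_def[of _ _ _ _ "Suc 0"])
  qed simp
next
  case (Suc n)
  show ?case
    unfolding caught_by_Suc[of _ _ _ s]
    by (intro integral_mono integrable_caught_by Suc.IH)
qed

lemma caught_by_robber_turn:
  assumes "finite (nbrs S E r)" "nbrs S E r \<noteq> {}"
  shows "caught_by \<theta> S E (Play c r True) (Suc n) =
     (\<Sum>r'\<in>nbrs S E r. caught_by \<theta> S E (if r' = c then Caught else Play c r' False) n)
       / card (nbrs S E r)"
  using assms by (simp add: caught_by_Suc game_step_def integral_pmf_of_set)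

lemma caught_by_cop_turn:
  fixes n :: nat
  assumes "finite (nbrs S E c)" "nbrs S E c \<noteq> {}"
    and "finite (directed_moves S E c r)" "directed_moves S E c r \<noteq> {}"
    and "0 \<le> \<theta>" "\<theta> \<le> 1"
  defines "g \<equiv> \<lambda>c'. caught_by \<theta> S E (if c' = r then Caught else Play c' r True) n"
  shows "caught_by \<theta> S E (Play c r False) (Suc n) =
     \<theta> * ((\<Sum>c'\<in>nbrs S E c. g c') / card (nbrs S E c))
     + (1 - \<theta>) * ((\<Sum>c'\<in>directed_moves S E c r. g c') / card (directed_moves S E c r))"
proof -
  define k where
    "k = (\<lambda>b. if b then pmf_of_set (nbrs S E c) else pmf_of_set (directed_moves S E c r))"
  have "caught_by \<theta> S E (Play c r False) (Suc n) =
        measure_pmf.expectation (bernoulli_pmf \<theta> \<bind> k) g"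
    by (simp add: caught_by_Suc game_step_def g_def k_def if_distrib)
  also have "\<dots> = (\<Sum>b\<in>UNIV. pmf (bernoulli_pmf \<theta>) b *\<^sub>R measure_pmf.expectation (k b) g)"
    by (rule pmf_expectation_bind) (use assms in \<open>auto simp: k_def\<close>)
  also have "\<dots> = \<theta> * measure_pmf.expectation (k True) g
                   + (1 - \<theta>) * measure_pmf.expectation (k False) g"
    using assms by (simp add: UNIV_bool)
  finally show ?thesis
    using assms by (simp add: k_def integral_pmf_of_set)
qed

text \<open>Summation by parts; working in \<^typ>\<open>ennreal\<close> avoids any summability hypothesis
on \<open>u\<close>.\<close>

lemma suminf_index_times_decrement:
  fixes u :: "nat \<Rightarrow> real"
  assumes anti: "antimono u" and lim: "u \<longlonglongrightarrow> 0"
  shows "(\<Sum>n. ennreal (real n * (u (n - 1) - u n))) = (\<Sum>n. ennreal (u n))"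
proof -
  define h where "h n = real n * (u (n - 1) - u n)" for n
  have u_nonneg: "0 \<le> u n" for n
    using decseq_ge[OF anti lim] .
  have h_nonneg: "0 \<le> h n" for n
    using anti by (cases n) (auto simp: h_def antimono_def)
  have partial: "(\<Sum>n<Suc N. h n) = (\<Sum>k<N. u k - u N)" for N
    by (induction N) (simp_all add: h_def sum_subtractf algebra_simps)
  have "(\<Sum>n<N. h n) \<le> (\<Sum>n<N. u n)" for N
  proof (cases N)
    case (Suc M)
    have "(\<Sum>n<N. h n) \<le> (\<Sum>k<M. u k)"
      unfolding Suc partial using u_nonneg by (simp add: sum_subtractf)
    also have "\<dots> \<le> (\<Sum>n<N. u n)"
      using Suc u_nonneg by simp
    finally show ?thesis .
  qed simp
  then have le: "(\<Sum>n. ennreal (h n)) \<le> (\<Sum>n. ennreal (u n))"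
    unfolding suminf_eq_SUP by (intro SUP_mono) (auto simp: h_nonneg u_nonneg sum_nonneg)
  have "(\<Sum>k<K. ennreal (u k)) \<le> (\<Sum>n. ennreal (h n))" for K
  proof (rule LIMSEQ_le_const2)
    show "(\<lambda>N. ennreal (\<Sum>k<K. u k - u N)) \<longlonglongrightarrow> (\<Sum>k<K. ennreal (u k))"
      using tendsto_diff[OF tendsto_const lim] u_nonneg by (auto intro!: tendsto_ennrealI tendsto_sum)
    show "\<exists>N0. \<forall>N\<ge>N0. ennreal (\<Sum>k<K. u k - u N) \<le> (\<Sum>n. ennreal (h n))"
    proof (intro exI allI impI)
      fix N assume "K \<le> N"
      then have "(\<Sum>k<K. u k - u N) \<le> (\<Sum>n<Suc N. h n)"
        unfolding partial using anti by (intro sum_mono2) (auto simp: antimono_def)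
      then have "ennreal (\<Sum>k<K. u k - u N) \<le> (\<Sum>n<Suc N. ennreal (h n))"
        by (simp add: h_nonneg ennreal_leI del: sum.lessThan_Suc)
      also have "\<dots> \<le> (\<Sum>n. ennreal (h n))"
        by (rule sum_le_suminf) auto
      finally show "ennreal (\<Sum>k<K. u k - u N) \<le> (\<Sum>n. ennreal (h n))" .
    qed
  qed
  then have "(\<Sum>n. ennreal (u n)) \<le> (\<Sum>n. ennreal (h n))"
    unfolding suminf_eq_SUP[of "\<lambda>n. ennreal (u n)"] by (rule SUP_least)
  with le show ?thesis
    unfolding h_def by (rule antisym)
qed

lemma expected_capture_time_eq_tail_sum:
  assumes lim: "caught_by \<theta> S E s \<longlonglongrightarrow> 1"
  shows "expected_capture_time \<theta> S E s = (\<Sum>n. ennreal (1 - caught_by \<theta> S E s n))"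
proof -
  let ?p = "caught_by \<theta> S E s"
  have inc: "incseq ?p"
    by (rule incseq_SucI) (rule caught_by_le_Suc)
  have decrement: "real n * capture_at \<theta> S E s n = real n * ((1 - ?p (n - 1)) - (1 - ?p n))" for n
    by (cases n) (simp_all add: capture_at_def)
  have "(\<Sum>n. ennreal (real n * capture_at \<theta> S E s n)) = (\<Sum>n. ennreal (1 - ?p n))"
    unfolding decrement using inc tendsto_diff[OF tendsto_const lim, of 1]
    by (intro suminf_index_times_decrement) (auto simp: monotone_def)
  moreover have "(SUP n. ennreal (?p n)) = 1"
  proof (rule LIMSEQ_unique)
    show "(\<lambda>n. ennreal (?p n)) \<longlonglongrightarrow> (SUP n. ennreal (?p n))"
      using inc by (intro LIMSEQ_SUP) (auto simp: incseq_def ennreal_leI)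
    show "(\<lambda>n. ennreal (?p n)) \<longlonglongrightarrow> 1"
      using tendsto_ennrealI[OF lim] by simp
  qed
  ultimately show ?thesis
    by (simp add: expected_capture_time_def)
qed

fun cyclic_prod :: "real list \<Rightarrow> nat \<Rightarrow> real" where
  "cyclic_prod fs 0 = 1"
| "cyclic_prod fs (Suc n) = hd fs * cyclic_prod (rotate1 fs) n"

lemma cyclic_prod_nonneg:
  assumes "fs \<noteq> []" "\<forall>f\<in>set fs. 0 \<le> f"
  shows "0 \<le> cyclic_prod fs n"
  using assms by (induction n arbitrary: fs) auto

lemma cyclic_prod_add: "cyclic_prod fs (m + n) = cyclic_prod fs m * cyclic_prod (rotate m fs) n"
  by (induction m arbitrary: fs) (simp_all add: rotate1_rotate_swap rotate_Suc)

lemma cyclic_prod_eq_prod_list_take: "n \<le> length fs \<Longrightarrow> cyclic_prod fs n = prod_list (take n fs)"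
proof (induction n arbitrary: fs)
  case (Suc n)
  then obtain x xs where "fs = x # xs" "n \<le> length xs"
    by (cases fs) auto
  with Suc.IH[of "xs @ [x]"] show ?case
    by simp
qed simp

lemma cyclic_prod_period:
  "cyclic_prod fs (length fs + n) = prod_list fs * cyclic_prod fs n"
  by (simp add: cyclic_prod_add cyclic_prod_eq_prod_list_take)

lemma sums_quasiperiodic:
  fixes u :: "nat \<Rightarrow> real"
  assumes nonneg: "\<And>n. 0 \<le> u n" and period: "\<And>n. u (p + n) = x * u n"
    and x: "0 \<le> x" "x < 1"
  shows "u sums ((\<Sum>j<p. u j) / (1 - x))"
proof -
  have split: "(\<Sum>n<p + m. u n) = (\<Sum>j<p. u j) + x * (\<Sum>n<m. u n)" for m
    by (induction m) (simp_all add: period[unfolded add.commute[of p]] algebra_simps)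
  have "(\<Sum>n<m. u n) \<le> (\<Sum>j<p. u j) / (1 - x)" for m
  proof -
    have "(\<Sum>n<m. u n) \<le> (\<Sum>n<p + m. u n)"
      using nonneg by (intro sum_mono2) auto
    moreover have "x * (\<Sum>n<m. u n) \<le> x * (\<Sum>n<p + m. u n)"
      using \<open>0 \<le> x\<close> nonneg by (intro mult_left_mono sum_mono2) auto
    ultimately show ?thesis
      using split[of m] x by (simp add: field_simps)
  qed
  then have summ: "summable u"
    by (rule summableI_nonneg_bounded[OF nonneg])
  have "(\<Sum>n. u (n + p)) = x * suminf u"
    using period suminf_mult[OF summ, of x] by (simp add: add.commute)
  then have "suminf u = x * suminf u + (\<Sum>j<p. u j)"
    using suminf_split_initial_segment[OF summ, of p] by simp
  then have "suminf u = (\<Sum>j<p. u j) / (1 - x)"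
    using x by (simp add: field_simps)
  then show ?thesis
    using summable_sums[OF summ] by simp
qed

lemma expected_capture_time_cyclic_prod:
  assumes caught: "\<And>n. caught_by \<theta> S E s n = 1 - cyclic_prod fs n"
    and fs: "fs \<noteq> []" "\<forall>f\<in>set fs. 0 \<le> f" and x: "prod_list fs < 1"
  shows "expected_capture_time \<theta> S E s =
           ennreal ((\<Sum>j<length fs. prod_list (take j fs)) / (1 - prod_list fs))"
proof -
  let ?u = "cyclic_prod fs"
  have "?u sums ((\<Sum>j<length fs. ?u j) / (1 - prod_list fs))"
    using fs x by (intro sums_quasiperiodic cyclic_prod_period cyclic_prod_nonneg prod_list_nonneg) auto
  also have "(\<Sum>j<length fs. ?u j) = (\<Sum>j<length fs. prod_list (take j fs))"
    by (simp add: cyclic_prod_eq_prod_list_take)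
  finally have sums: "?u sums ((\<Sum>j<length fs. prod_list (take j fs)) / (1 - prod_list fs))" .
  then have "caught_by \<theta> S E s \<longlonglongrightarrow> 1 - 0"
    unfolding caught by (intro tendsto_diff tendsto_const summable_LIMSEQ_zero sums_summable)
  then have "expected_capture_time \<theta> S E s = (\<Sum>n. ennreal (?u n))"
    by (simp add: expected_capture_time_eq_tail_sum caught)
  also have "\<dots> = ennreal ((\<Sum>j<length fs. prod_list (take j fs)) / (1 - prod_list fs))"
    using sums fs by (simp add: cyclic_prod_nonneg sums_iff suminf_ennreal2)
  finally show ?thesis .
qed

lemma walk_0_eq: "walk E 0 x y \<Longrightarrow> x = y"
  by (erule walk.cases) auto

lemma walk_1_adj: "walk E (Suc 0) x y \<Longrightarrow> E x y"
  by (erule walk.cases) (auto dest: walk_0_eq)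

lemma gdist_self [simp]: "gdist E x x = 0"
  unfolding gdist_def by (rule Least_eq_0) (rule walk_nil)

lemma gdist_eq_1: "E x y \<Longrightarrow> x \<noteq> y \<Longrightarrow> gdist E x y = 1"
  unfolding gdist_def
proof (rule Least_equality)
  assume "E x y"
  then show "walk E 1 x y"
    by (auto intro: walk.intros)
next
  fix m assume "x \<noteq> y" "walk E m x y"
  then show "1 \<le> m"
    by (cases m) (auto dest: walk_0_eq)
qed

lemma gdist_eq_2: "x \<noteq> y \<Longrightarrow> \<not> E x y \<Longrightarrow> E x z \<Longrightarrow> E z y \<Longrightarrow> gdist E x y = 2"
  unfolding gdist_def
proof (rule Least_equality)
  assume "E x z" "E z y"
  then show "walk E 2 x y"
    by (auto intro!: walk.intros simp: numeral_2_eq_2)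
next
  fix m assume "x \<noteq> y" "\<not> E x y" "walk E m x y"
  then show "2 \<le> m"
  proof (cases m)
    case (Suc k)
    with \<open>\<not> E x y\<close> \<open>walk E m x y\<close> show ?thesis
      by (cases k) (auto dest: walk_1_adj)
  qed (auto dest: walk_0_eq)
qed

lemma sum_divide_card_one_exception:
  fixes g :: "'a \<Rightarrow> real"
  assumes "finite X" "c \<in> X" "g c = 1" "\<And>x. x \<in> X \<Longrightarrow> x \<noteq> c \<Longrightarrow> g x = 1 - q"
  shows "(\<Sum>x\<in>X. g x) / card X = 1 - (1 - 1 / card X) * q"
proof -
  have "(\<Sum>x\<in>X. g x) = g c + (\<Sum>x\<in>X - {c}. g x)"
    using assms by (simp add: sum.remove)
  also have "(\<Sum>x\<in>X - {c}. g x) = (card X - 1) * (1 - q)"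
    using assms by (simp add: of_nat_diff)
  finally have "(\<Sum>x\<in>X. g x) = 1 + (card X - 1) * (1 - q)"
    using assms by simp
  moreover have "card X > 0"
    using assms card_gt_0_iff by blast
  ultimately show ?thesis
    by (simp add: field_simps)
qed

locale complete_bipartite =
  fixes A B :: "'a set" and E :: "'a \<Rightarrow> 'a \<Rightarrow> bool" and S :: "'a set"
  assumes finite_A: "finite A" and finite_B: "finite B"
    and A_ne: "A \<noteq> {}" and B_ne: "B \<noteq> {}" and disjoint: "A \<inter> B = {}"
    and adj_iff: "\<And>x y. E x y \<longleftrightarrow> (x \<in> A \<and> y \<in> B) \<or> (x \<in> B \<and> y \<in> A)"
    and vertices: "S = A \<union> B"
begin

lemma swap: "complete_bipartite B A E S"
  using finite_A finite_B A_ne B_ne disjoint adj_iff vertices by unfold_locales auto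

lemma nbrs_of_A: "a \<in> A \<Longrightarrow> nbrs S E a = B"
  unfolding nbrs_def vertices using adj_iff disjoint by auto

lemma directed_moves_adjacent:
  assumes a: "a \<in> A" and b: "b \<in> B"
  shows "directed_moves S E a b = {b}"
proof -
  have "gdist E a b = 1"
    using a b disjoint by (intro gdist_eq_1) (auto simp: adj_iff)
  moreover have "gdist E z b = 2" if "z \<in> B" "z \<noteq> b" for z
    using a b that disjoint by (intro gdist_eq_2[of z b E a]) (auto simp: adj_iff)
  ultimately show ?thesis
    unfolding directed_moves_def nbrs_of_A[OF a] using b by fastforce
qed

lemma directed_moves_same_side:
  assumes a: "a \<in> A" and b: "b \<in> A" and ab: "a \<noteq> b"
  shows "directed_moves S E a b = B"
proof -
  obtain z where z: "z \<in> B"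
    using B_ne by auto
  have "gdist E a b = 2"
    using a b ab disjoint z by (intro gdist_eq_2[of a b E z]) (auto simp: adj_iff)
  moreover have "gdist E y b = 1" if "y \<in> B" for y
    using b that disjoint by (intro gdist_eq_1) (auto simp: adj_iff)
  ultimately show ?thesis
    unfolding directed_moves_def nbrs_of_A[OF a] by auto
qed

lemma caught_by_robber_move_to_cop_side:
  assumes "r \<in> A" "c \<in> B"
    and "\<And>r'. r' \<in> B \<Longrightarrow> r' \<noteq> c \<Longrightarrow> caught_by \<theta> S E (Play c r' False) n = 1 - q"
  shows "caught_by \<theta> S E (Play c r True) (Suc n) = 1 - (1 - 1 / card B) * q"
proof -
  have "(\<Sum>r'\<in>B. caught_by \<theta> S E (if r' = c then Caught else Play c r' False) n) / card B
        = 1 - (1 - 1 / card B) * q"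
    using assms finite_B by (intro sum_divide_card_one_exception) auto
  then show ?thesis
    using assms finite_B B_ne by (simp add: caught_by_robber_turn nbrs_of_A)
qed

lemma caught_by_robber_move_from_cop_side:
  assumes "r \<in> A" "c \<in> A"
    and "\<And>r'. r' \<in> B \<Longrightarrow> caught_by \<theta> S E (Play c r' False) n = 1 - q"
  shows "caught_by \<theta> S E (Play c r True) (Suc n) = 1 - q"
proof -
  have "(\<Sum>r'\<in>B. caught_by \<theta> S E (if r' = c then Caught else Play c r' False) n)
        = (\<Sum>r'\<in>B. 1 - q)"
    using assms disjoint by (intro sum.cong) auto
  then show ?thesis
    using assms finite_B B_ne by (simp add: caught_by_robber_turn nbrs_of_A)
qed

context
  fixes \<theta> :: real
  assumes \<theta>: "0 \<le> \<theta>" "\<theta> \<le> 1"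
begin

lemma caught_by_cop_move_adjacent:
  assumes "c \<in> A" "r \<in> B"
    and "\<And>c'. c' \<in> B \<Longrightarrow> c' \<noteq> r \<Longrightarrow> caught_by \<theta> S E (Play c' r True) n = 1 - q"
  shows "caught_by \<theta> S E (Play c r False) (Suc n) = 1 - \<theta> * (1 - 1 / card B) * q"
proof -
  have "(\<Sum>c'\<in>B. caught_by \<theta> S E (if c' = r then Caught else Play c' r True) n) / card B
        = 1 - (1 - 1 / card B) * q"
    using assms finite_B by (intro sum_divide_card_one_exception) auto
  then have "caught_by \<theta> S E (Play c r False) (Suc n)
              = \<theta> * (1 - (1 - 1 / card B) * q) + (1 - \<theta>)"
    using assms finite_B B_ne \<theta> by (simp add: caught_by_cop_turn nbrs_of_A directed_moves_adjacent)
  then show ?thesis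
    by (simp add: algebra_simps)
qed

lemma caught_by_cop_move_same_side:
  assumes "c \<in> A" "r \<in> A" "c \<noteq> r"
    and "\<And>c'. c' \<in> B \<Longrightarrow> caught_by \<theta> S E (Play c' r True) n = 1 - q"
  shows "caught_by \<theta> S E (Play c r False) (Suc n) = 1 - q"
proof -
  have "(\<Sum>c'\<in>B. caught_by \<theta> S E (if c' = r then Caught else Play c' r True) n)
        = (\<Sum>c'\<in>B. 1 - q)"
    using assms disjoint by (intro sum.cong) auto
  then have "caught_by \<theta> S E (Play c r False) (Suc n) = \<theta> * (1 - q) + (1 - \<theta>) * (1 - q)"
    using assms finite_B B_ne \<theta> by (simp add: caught_by_cop_turn nbrs_of_A directed_moves_same_side)
  then show ?thesis
    by (simp add: algebra_simps)
qed

end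

end

text \<open>Each list holds the one-move survival probabilities of a cycle of four classes,
starting at the class in question. The other two classes of the cycle are the first two for the
swapped graph, which is why the induction runs over all complete bipartite graphs.\<close>

lemma caught_by_opposite_sides:
  assumes "complete_bipartite A B E S" and \<theta>: "0 \<le> \<theta>" "\<theta> \<le> 1"
  shows "(\<forall>a\<in>A. \<forall>b\<in>B. caught_by \<theta> S E (Play a b True) n
            = 1 - cyclic_prod [1 - 1 / card A, 1, 1 - 1 / card B, 1] n)
       \<and> (\<forall>a\<in>A. \<forall>b\<in>A. a \<noteq> b \<longrightarrow> caught_by \<theta> S E (Play a b False) n
            = 1 - cyclic_prod [1, 1 - 1 / card B, 1, 1 - 1 / card A] n)"
  using assms(1)
proof (induction n arbitrary: A B)
  case (Suc n)
  interpret G: complete_bipartite A B E S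
    by (rule Suc.prems)
  interpret G': complete_bipartite B A E S
    by (rule G.swap)
  note IH = Suc.IH[OF Suc.prems] Suc.IH[OF G.swap]
  have "caught_by \<theta> S E (Play a b True) (Suc n)
          = 1 - (1 - 1 / card A) * cyclic_prod [1, 1 - 1 / card B, 1, 1 - 1 / card A] n"
    if "a \<in> A" "b \<in> B" for a b
    using IH that by (intro G'.caught_by_robber_move_to_cop_side) auto
  moreover have "caught_by \<theta> S E (Play a b False) (Suc n)
          = 1 - cyclic_prod [1 - 1 / card B, 1, 1 - 1 / card A, 1] n"
    if "a \<in> A" "b \<in> A" "a \<noteq> b" for a b
    using IH that by (intro G.caught_by_cop_move_same_side[OF \<theta>]) auto
  ultimately show ?case
    by simp
qed simp

lemma caught_by_same_side:
  assumes "complete_bipartite A B E S" and \<theta>: "0 \<le> \<theta>" "\<theta> \<le> 1"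
  shows "(\<forall>a\<in>A. \<forall>b\<in>A. a \<noteq> b \<longrightarrow> caught_by \<theta> S E (Play a b True) n
            = 1 - cyclic_prod [1, \<theta> * (1 - 1 / card B), 1, \<theta> * (1 - 1 / card A)] n)
       \<and> (\<forall>a\<in>A. \<forall>b\<in>B. caught_by \<theta> S E (Play a b False) n
            = 1 - cyclic_prod [\<theta> * (1 - 1 / card B), 1, \<theta> * (1 - 1 / card A), 1] n)"
  using assms(1)
proof (induction n arbitrary: A B)
  case (Suc n)
  interpret G: complete_bipartite A B E S
    by (rule Suc.prems)
  note IH = Suc.IH[OF Suc.prems] Suc.IH[OF G.swap]
  have "caught_by \<theta> S E (Play a b True) (Suc n)
          = 1 - cyclic_prod [\<theta> * (1 - 1 / card B), 1, \<theta> * (1 - 1 / card A), 1] n"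
    if "a \<in> A" "b \<in> A" "a \<noteq> b" for a b
    using IH that by (intro G.caught_by_robber_move_from_cop_side) auto
  moreover have "caught_by \<theta> S E (Play a b False) (Suc n)
          = 1 - \<theta> * (1 - 1 / card B) * cyclic_prod [1, \<theta> * (1 - 1 / card A), 1, \<theta> * (1 - 1 / card B)] n"
    if "a \<in> A" "b \<in> B" for a b
    using IH that by (intro G.caught_by_cop_move_adjacent[OF \<theta>]) auto
  ultimately show ?case
    by (simp add: mult.assoc)
qed simp

lemma expected_capture_time_opposite_sides:
  assumes G: "complete_bipartite A B E S" and \<theta>: "0 \<le> \<theta>" "\<theta> \<le> 1"
    and "a \<in> A" "b \<in> B"
  shows "expected_capture_time \<theta> S E (Play a b True)
           = ennreal ((4 * real (card A) * real (card B) - 3 * real (card B) - real (card A) + 1)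
                      / (real (card A) + real (card B) - 1))"
proof -
  interpret complete_bipartite A B E S
    by (rule G)
  define x y where "x = real (card A)" and "y = real (card B)"
  have "1 \<le> x" "1 \<le> y"
    using finite_A finite_B A_ne B_ne by (simp_all add: x_def y_def Suc_le_eq card_gt_0_iff)
  let ?fs = "[1 - 1 / x, 1, 1 - 1 / y, 1]"
  have num: "(\<Sum>j<length ?fs. prod_list (take j ?fs)) = (4 * x * y - 3 * y - x + 1) / (x * y)"
    using \<open>1 \<le> x\<close> \<open>1 \<le> y\<close> by (simp add: field_simps)
  have den: "1 - prod_list ?fs = (x + y - 1) / (x * y)"
    using \<open>1 \<le> x\<close> \<open>1 \<le> y\<close> by (simp add: field_simps)
  have "expected_capture_time \<theta> S E (Play a b True)
          = ennreal ((\<Sum>j<length ?fs. prod_list (take j ?fs)) / (1 - prod_list ?fs))"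
  proof (rule expected_capture_time_cyclic_prod)
    show "caught_by \<theta> S E (Play a b True) n = 1 - cyclic_prod ?fs n" for n
      using caught_by_opposite_sides[OF G \<theta>] assms by (simp add: x_def y_def)
    show "prod_list ?fs < 1"
      using \<open>1 \<le> x\<close> \<open>1 \<le> y\<close> by (simp add: field_simps)
  qed (use \<open>1 \<le> x\<close> \<open>1 \<le> y\<close> in auto)
  also have "\<dots> = (4 * x * y - 3 * y - x + 1) / (x + y - 1)"
    unfolding num den using \<open>1 \<le> x\<close> \<open>1 \<le> y\<close> by simp
  finally show ?thesis
    by (simp add: x_def y_def)
qed

lemma expected_capture_time_same_side:
  assumes G: "complete_bipartite A B E S" and \<theta>: "0 \<le> \<theta>" "\<theta> \<le> 1"
    and "a \<in> A" "b \<in> A" "a \<noteq> b"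
  shows "expected_capture_time \<theta> S E (Play a b True)
           = ennreal (2 * (real (card A) * real (card B) + \<theta> * real (card A) * (real (card B) - 1))
                      / (real (card A) * real (card B) - \<theta>^2 * (real (card A) - 1) * (real (card B) - 1)))"
proof -
  interpret complete_bipartite A B E S
    by (rule G)
  define x y where "x = real (card A)" and "y = real (card B)"
  have "1 \<le> x" "1 \<le> y"
    using finite_A finite_B A_ne B_ne by (simp_all add: x_def y_def Suc_le_eq card_gt_0_iff)
  let ?fs = "[1, \<theta> * (1 - 1 / y), 1, \<theta> * (1 - 1 / x)]"
  have num: "(\<Sum>j<length ?fs. prod_list (take j ?fs)) = 2 * (x * y + \<theta> * x * (y - 1)) / (x * y)"
    using \<open>1 \<le> x\<close> \<open>1 \<le> y\<close> by (simp add: field_simps)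
  have den: "1 - prod_list ?fs = (x * y - \<theta>^2 * (x - 1) * (y - 1)) / (x * y)"
    using \<open>1 \<le> x\<close> \<open>1 \<le> y\<close> by (simp add: field_simps power2_eq_square)
  have "expected_capture_time \<theta> S E (Play a b True)
          = ennreal ((\<Sum>j<length ?fs. prod_list (take j ?fs)) / (1 - prod_list ?fs))"
  proof (rule expected_capture_time_cyclic_prod)
    show "caught_by \<theta> S E (Play a b True) n = 1 - cyclic_prod ?fs n" for n
      using caught_by_same_side[OF G \<theta>] assms by (simp add: x_def y_def)
    have "\<theta> * (1 - 1 / y) \<le> 1 - 1 / y"
      using \<theta> \<open>1 \<le> y\<close> by (intro mult_left_le_one_le) auto
    also have "\<dots> < 1"
      using \<open>1 \<le> y\<close> by simp
    finally have "\<theta> * (1 - 1 / y) < 1" .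
    moreover have "\<theta> * (1 - 1 / x) \<le> 1" "0 \<le> \<theta> * (1 - 1 / y)"
      using \<theta> \<open>1 \<le> x\<close> \<open>1 \<le> y\<close> by (auto intro: mult_le_one)
    ultimately show "prod_list ?fs < 1"
      using mult_left_le[of "\<theta> * (1 - 1 / x)" "\<theta> * (1 - 1 / y)"] by simp
  qed (use \<open>1 \<le> x\<close> \<open>1 \<le> y\<close> \<theta> in auto)
  also have "\<dots> = 2 * (x * y + \<theta> * x * (y - 1)) / (x * y - \<theta>^2 * (x - 1) * (y - 1))"
    unfolding num den using \<open>1 \<le> x\<close> \<open>1 \<le> y\<close> by simp
  finally show ?thesis
    by (simp add: x_def y_def)
qed

lemma complete_bipartite_K:
  assumes "0 < v" "0 < w"
  shows "complete_bipartite (Kpart_V v) (Kpart_W w) (Kadj v w) (Kverts v w)"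
  using assms by unfold_locales (auto simp: Kverts_def Kadj_def Kpart_V_def Kpart_W_def)

theorem mainTheorem5:
  fixes v w :: nat and \<theta> :: real
  assumes "v > 0" and "w > 0" and "0 \<le> \<theta>" and "\<theta> \<le> 1"
  shows
   "(\<forall>a \<in> Kpart_V v. \<forall>b \<in> Kpart_W w.
       expected_capture_time \<theta> (Kverts v w) (Kadj v w) (Play a b True)
       = ennreal ((4 * real v * real w - 3 * real w - real v + 1) / (real v + real w - 1)))
  \<and> (\<forall>a \<in> Kpart_V v. \<forall>b \<in> Kpart_V v. a \<noteq> b \<longrightarrow>
       expected_capture_time \<theta> (Kverts v w) (Kadj v w) (Play a b True)
       = ennreal (2 * (real v * real w + \<theta> * real v * (real w - 1))
                  / (real v * real w - \<theta>^2 * (real v - 1) * (real w - 1))))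
  \<and> (\<forall>a \<in> Kpart_W w. \<forall>b \<in> Kpart_V v.
       expected_capture_time \<theta> (Kverts v w) (Kadj v w) (Play a b True)
       = ennreal ((4 * real v * real w - 3 * real v - real w + 1) / (real v + real w - 1)))
  \<and> (\<forall>a \<in> Kpart_W w. \<forall>b \<in> Kpart_W w. a \<noteq> b \<longrightarrow>
       expected_capture_time \<theta> (Kverts v w) (Kadj v w) (Play a b True)
       = ennreal (2 * (real v * real w + \<theta> * real w * (real v - 1))
                  / (real v * real w - \<theta>^2 * (real v - 1) * (real w - 1))))"
proof -
  have VW: "complete_bipartite (Kpart_V v) (Kpart_W w) (Kadj v w) (Kverts v w)"
    using assms(1,2) by (rule complete_bipartite_K)
  have WV: "complete_bipartite (Kpart_W w) (Kpart_V v) (Kadj v w) (Kverts v w)"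
    using VW by (rule complete_bipartite.swap)
  have "card (Kpart_V v) = v" "card (Kpart_W w) = w"
    by (simp_all add: Kpart_V_def Kpart_W_def card_image)
  with assms(3,4) show ?thesis
    using expected_capture_time_opposite_sides[OF VW] expected_capture_time_same_side[OF VW]
      expected_capture_time_opposite_sides[OF WV] expected_capture_time_same_side[OF WV]
    by (simp add: ac_simps)
qed

end
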